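(* Let $P$ be a non-centered convex polyomino, let $c_1$ be its leftmost column, let $Y$ be the row of $P$ containing the bottom cell of $c_1$, and let $T$ be the column of $P$ containing the rightmost cell of $Y$. Then the set $\theta$ of cells of $P$ lying in columns strictly to the right of $T$ is non-empty.
   Context: A cell is a unit square of $\mathbb Z\times\mathbb Z$; a polyomino is a finite connected union of cells with no cut point. A polyomino is convex if its intersection with every vertical and every horizontal line of cells is connected. The minimal bounding rectangle of a convex polyomino is the smallest lattice rectangle containing it; a convex polyomino is centered if at least one of its rows touches both the left and the right side of its minimal bounding rectangle. *)

theory Defs
  imports Main
begin

text \<open>A cell is identified with the integer coordinates (column, row) of its lower-left
corner: the cell (x,y) is the unit square [x,x+1] x [y,y+1].\<close>
type_synonym cell = "int \<times> int"

definition edge_adj :: "cell \<Rightarrow> cell \<Rightarrow> bool" where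
  "edge_adj c d \<longleftrightarrow> \<bar>fst c - fst d\<bar> + \<bar>snd c - snd d\<bar> = 1"

text \<open>A polyomino: a finite nonempty set of cells whose union is connected without cut
point, i.e. the cells are connected through shared edges.\<close>
definition polyomino :: "cell set \<Rightarrow> bool" where
  "polyomino P \<longleftrightarrow> finite P \<and> P \<noteq> {} \<and>
     (\<forall>c\<in>P. \<forall>d\<in>P. (\<lambda>u v. u \<in> P \<and> v \<in> P \<and> edge_adj u v)\<^sup>*\<^sup>* c d)"

definition row_of :: "cell set \<Rightarrow> int \<Rightarrow> cell set" where
  "row_of P y = {c \<in> P. snd c = y}"

definition col_of :: "cell set \<Rightarrow> int \<Rightarrow> cell set" where
  "col_of P x = {c \<in> P. fst c = x}"

definition convex_polyomino :: "cell set \<Rightarrow> bool" where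
  "convex_polyomino P \<longleftrightarrow> polyomino P \<and>
     (\<forall>y x1 x2 x. (x1, y) \<in> P \<longrightarrow> (x2, y) \<in> P \<longrightarrow> x1 \<le> x \<longrightarrow> x \<le> x2 \<longrightarrow> (x, y) \<in> P) \<and>
     (\<forall>x y1 y2 y. (x, y1) \<in> P \<longrightarrow> (x, y2) \<in> P \<longrightarrow> y1 \<le> y \<longrightarrow> y \<le> y2 \<longrightarrow> (x, y) \<in> P)"

definition min_col :: "cell set \<Rightarrow> int" where
  "min_col P = Min (fst ` P)"

definition max_col :: "cell set \<Rightarrow> int" where
  "max_col P = Max (fst ` P)"

definition centered :: "cell set \<Rightarrow> bool" where
  "centered P \<longleftrightarrow> (\<exists>y. (min_col P, y) \<in> row_of P y \<and> (max_col P, y) \<in> row_of P y)"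

end

theory Submission
  imports Defs
begin

text \<open>If no cell lay to the right of column \<open>T\<close>, then \<open>T\<close> would be the right side of the
bounding rectangle, and the row \<open>Y\<close>, which reaches the left side at the bottom cell of \<open>c\<^sub>1\<close>
and the right side at its rightmost cell, would make \<open>P\<close> centered.\<close>

lemma convex_polyomino_finite_nonempty:
  assumes "convex_polyomino P"
  shows "finite P" "P \<noteq> {}"
  using assms by (auto simp: convex_polyomino_def polyomino_def)

lemma min_col_in_cols:
  assumes "finite P" "P \<noteq> {}"
  shows "\<exists>y. (min_col P, y) \<in> P"
proof -
  have "min_col P \<in> fst ` P"
    using assms by (simp add: min_col_def)
  then show ?thesis by force
qed

lemma Min_snd_col_of_mem:
  assumes "finite P" "\<exists>y. (x, y) \<in> P"
  shows "(x, Min (snd ` col_of P x)) \<in> P"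
proof -
  have "finite (col_of P x)" "col_of P x \<noteq> {}"
    using assms by (auto simp: col_of_def)
  then have "Min (snd ` col_of P x) \<in> snd ` col_of P x"
    by simp
  then show ?thesis by (force simp: col_of_def)
qed

lemma Max_fst_row_of_mem:
  assumes "finite P" "\<exists>x. (x, y) \<in> P"
  shows "(Max (fst ` row_of P y), y) \<in> P"
proof -
  have "finite (row_of P y)" "row_of P y \<noteq> {}"
    using assms by (auto simp: row_of_def)
  then have "Max (fst ` row_of P y) \<in> fst ` row_of P y"
    by simp
  then show ?thesis by (force simp: row_of_def)
qed

lemma max_col_eq_if_nothing_right:
  assumes "finite P" "(x, y) \<in> P" "{c \<in> P. fst c > x} = {}"
  shows "max_col P = x"
proof (rule antisym)
  have "max_col P \<in> fst ` P"
    using assms(1,2) unfolding max_col_def by (intro Max_in) auto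
  then show "max_col P \<le> x"
    using assms(3) by force
  show "x \<le> max_col P"
    using assms(1,2) unfolding max_col_def by (metis Max_ge finite_imageI fst_conv image_eqI)
qed

lemma centeredI:
  assumes "(min_col P, y) \<in> P" "(max_col P, y) \<in> P"
  shows "centered P"
  using assms by (auto simp: centered_def row_of_def)

theorem mainTheorem4:
  fixes P :: "cell set" and x1 yY xT :: int
  assumes "convex_polyomino P"
    and "\<not> centered P"
    and "x1 = min_col P"
    and "yY = Min (snd ` col_of P x1)"
    and "xT = Max (fst ` row_of P yY)"
  shows "{c \<in> P. fst c > xT} \<noteq> {}"
proof
  assume nothing_right: "{c \<in> P. fst c > xT} = {}"
  note fin = convex_polyomino_finite_nonempty(1)[OF assms(1)]
  have left_end: "(x1, yY) \<in> P"
    using Min_snd_col_of_mem[OF fin] min_col_in_cols[OF fin convex_polyomino_finite_nonempty(2)]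
      assms(1,3,4) by blast
  then have right_end: "(xT, yY) \<in> P"
    using Max_fst_row_of_mem[OF fin] assms(5) by blast
  then have "max_col P = xT"
    using max_col_eq_if_nothing_right[OF fin _ nothing_right] by blast
  then have "centered P"
    using centeredI left_end right_end assms(3) by metis
  with assms(2) show False ..
qed

end
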